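(* Assume $\Sigma$ is already in a special coordinate basis (SCB) as in the context, with state $x=(x_a,x_b,x_c,x_d)$. Then there exists a nonsingular matrix $T_d\in\mathbb R^{n_d\times n_d}$ such that, with $T_s=\mathrm{diag}(I_{n_a},I_{n_b},I_{n_c},T_d)$ and the state transformation $x=T_s\bar x$, the transformed system is again in SCB (with the same $C_d$, $B_d$, $q_1,\dots,q_{m_d}$) and its matrix $F_{dd}$ has the following structure: partitioning the columns of $F_{dd}$ into consecutive blocks of widths $q_1,\dots,q_{m_d}$ and denoting by $f_{i,j,k}$ the entry of row $i$ in the $k$-th column of block $j$, one has $f_{i,j,k}=0$ whenever $j\ge i$ or $k=1$. Moreover, $C_dT_d=C_d$ and $T_d^{-1}B_d=B_d$.
   Context: Notation: for an integer $k\ge 1$, $J_k\in\mathbb R^{k\times k}$ is the matrix with ones on the first superdiagonal and zeros elsewhere, $B_k=[0\ \cdots\ 0\ 1]^\top\in\mathbb R^{k}$, $C_k=[1\ 0\ \cdots\ 0]\in\mathbb R^{1\times k}$, and $\mathrm{diag}(\cdot)$ denotes a (block) diagonal matrix. Consider the linear time-invariant system $\Sigma$: $\dot x=Ax+Bu$, $y=Cx+Du$, with $x\in\mathbb R^n$, $u\in\mathbb R^m$, $y\in\mathbb R^p$, $\operatorname{rank}D=m_0$, and with $[B^\top\ D^\top]$ and $[C\ D]$ of full rank. Special coordinate basis (SCB): $\Sigma$ is in SCB if its state, input and output are partitioned as $x=(x_a,x_b,x_c,x_d)$ with $x_a\in\mathbb R^{n_a},x_b\in\mathbb R^{n_b},x_c\in\mathbb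 R^{n_c},x_d\in\mathbb R^{n_d}$, $u=(u_0,u_d,u_c)$ with $u_0\in\mathbb R^{m_0},u_d\in\mathbb R^{m_d},u_c\in\mathbb R^{m_c}$, $y=(y_0,y_d,y_b)$ with $y_0\in\mathbb R^{m_0},y_d\in\mathbb R^{m_d},y_b\in\mathbb R^{p_b}$, such that $y_0=C_{0a}x_a+C_{0b}x_b+C_{0c}x_c+C_{0d}x_d+u_0$, $y_d=C_dx_d$, $y_b=C_bx_b$, $\dot x_a=A_ax_a+H_{ab}C_bx_b+H_{ad}C_dx_d+B_{0a}y_0$, $\dot x_b=A_bx_b+H_{bd}C_dx_d+B_{0b}y_0$, $\dot x_c=B_cF_{ca}x_a+H_{cb}C_bx_b+A_cx_c+H_{cd}C_dx_d+B_{0c}y_0+B_cu_c$, $\dot x_d=B_dF_{da}x_a+B_dF_{db}x_b+B_dF_{dc}x_c+A_dx_d+B_{0d}y_0+B_du_d$, with constant real matrices of appropriate dimensions, where $A_b=\mathrm{diag}(J_{l_1},\dots,J_{l_{p_b}})+H_{bb}C_b$, $C_b=\mathrm{diag}(C_{l_1},\dots,C_{l_{p_b}})$ for positive integers $l_i$ with $\sum_i l_i=n_b$; $B_d=\mathrm{diag}(B_{q_1},\dots,B_{q_{m_d}})$, $C_d=\mathrm{diag}(C_{q_1},\dots,C_{q_{m_d}})$ for integers $q_1\ge q_2\ge\dots\ge q_{m_d}\ge 1$ with $\sum_i q_i=n_d$; and $A_d=A_d^\star+B_dF_{dd}+H_{dd}C_d$ with $A_d^\star=\mathrm{diag}(J_{q_1},\dots,J_{q_{m_d}})$,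 $F_{dd}\in\mathbb R^{m_d\times n_d}$, $H_{dd}\in\mathbb R^{n_d\times m_d}$. *)

theory Defs
  imports "Jordan_Normal_Form.Matrix" "Jordan_Normal_Form.DL_Rank"
begin

definition J_blk :: "nat \<Rightarrow> real mat" where
  "J_blk k = mat k k (\<lambda>(i,j). if j = Suc i then 1 else 0)"

definition B_blk :: "nat \<Rightarrow> real mat" where
  "B_blk k = mat k 1 (\<lambda>(i,j). if i = k - 1 then 1 else 0)"

definition C_blk :: "nat \<Rightarrow> real mat" where
  "C_blk k = mat 1 k (\<lambda>(i,j). if j = 0 then 1 else 0)"

definition Jdiag :: "nat list \<Rightarrow> real mat" where
  "Jdiag ks = diag_block_mat (map J_blk ks)"

definition Bdiag :: "nat list \<Rightarrow> real mat" where
  "Bdiag ks = diag_block_mat (map B_blk ks)"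

definition Cdiag :: "nat list \<Rightarrow> real mat" where
  "Cdiag ks = diag_block_mat (map C_blk ks)"

definition mat_rank :: "real mat \<Rightarrow> nat" where
  "mat_rank M = vec_space.rank (dim_row M) M"

definition full_rank :: "real mat \<Rightarrow> bool" where
  "full_rank M \<longleftrightarrow> mat_rank M = min (dim_row M) (dim_col M)"

text \<open>The system (A,B,C,D) is in special coordinate basis with block sizes
  na, nb, nc, nd (state), m0, md, mc (input u = (u0,ud,uc)), m0, md, pb
  (output y = (y0,yd,yb)), chain lengths ls = [l_1,...,l_pb] and
  qs = [q_1,...,q_md], and with the given matrix Fdd in the decomposition
  A_d = A_d^* + B_d Fdd + H_dd C_d.\<close>

definition is_SCB ::
  "real mat \<Rightarrow> real mat \<Rightarrow> real mat \<Rightarrow> real mat \<Rightarrow>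
   nat \<Rightarrow> nat \<Rightarrow> nat \<Rightarrow> nat \<Rightarrow> nat \<Rightarrow> nat \<Rightarrow> nat \<Rightarrow> nat \<Rightarrow>
   nat list \<Rightarrow> nat list \<Rightarrow> real mat \<Rightarrow> bool" where
  "is_SCB A B C D na nb nc nd m0 md mc pb ls qs Fdd \<longleftrightarrow>
     length ls = pb \<and> (\<forall>l\<in>set ls. 1 \<le> l) \<and> sum_list ls = nb \<and>
     length qs = md \<and> sorted_wrt (\<ge>) qs \<and> (\<forall>q\<in>set qs. 1 \<le> q) \<and> sum_list qs = nd \<and>
     A \<in> carrier_mat (na+nb+nc+nd) (na+nb+nc+nd) \<and>
     B \<in> carrier_mat (na+nb+nc+nd) (m0+md+mc) \<and>
     C \<in> carrier_mat (m0+md+pb) (na+nb+nc+nd) \<and>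
     D \<in> carrier_mat (m0+md+pb) (m0+md+mc) \<and>
     Fdd \<in> carrier_mat md nd \<and>
     (\<exists>C0a C0b C0c C0d Aa Hab Had B0a Hbb Hbd B0b Fca Hcb Ac Hcd B0c Bc
        Fda Fdb Fdc Hdd B0d.
        C0a \<in> carrier_mat m0 na \<and> C0b \<in> carrier_mat m0 nb \<and>
        C0c \<in> carrier_mat m0 nc \<and> C0d \<in> carrier_mat m0 nd \<and>
        Aa \<in> carrier_mat na na \<and> Hab \<in> carrier_mat na pb \<and>
        Had \<in> carrier_mat na md \<and> B0a \<in> carrier_mat na m0 \<and>
        Hbb \<in> carrier_mat nb pb \<and> Hbd \<in> carrier_mat nb md \<and> B0b \<in> carrier_mat nb m0 \<and>
        Fca \<in> carrier_mat mc na \<and> Hcb \<in> carrier_mat nc pb \<and> Ac \<in> carrier_mat nc nc \<and>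
        Hcd \<in> carrier_mat nc md \<and> B0c \<in> carrier_mat nc m0 \<and> Bc \<in> carrier_mat nc mc \<and>
        Fda \<in> carrier_mat md na \<and> Fdb \<in> carrier_mat md nb \<and> Fdc \<in> carrier_mat md nc \<and>
        Hdd \<in> carrier_mat nd md \<and> B0d \<in> carrier_mat nd m0 \<and>
        (let Cb = Cdiag ls; Ab = Jdiag ls + Hbb * Cb;
             Bd = Bdiag qs; Cd = Cdiag qs; Ad = Jdiag qs + Bd * Fdd + Hdd * Cd in
         \<forall>xa \<in> carrier_vec na. \<forall>xb \<in> carrier_vec nb. \<forall>xc \<in> carrier_vec nc.
         \<forall>xd \<in> carrier_vec nd. \<forall>u0 \<in> carrier_vec m0. \<forall>ud \<in> carrier_vec md.
         \<forall>uc \<in> carrier_vec mc.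
           (let y0 = C0a *\<^sub>v xa + C0b *\<^sub>v xb + C0c *\<^sub>v xc + C0d *\<^sub>v xd + u0;
                x = xa @\<^sub>v xb @\<^sub>v xc @\<^sub>v xd;
                u = u0 @\<^sub>v ud @\<^sub>v uc in
            C *\<^sub>v x + D *\<^sub>v u = y0 @\<^sub>v (Cd *\<^sub>v xd) @\<^sub>v (Cb *\<^sub>v xb) \<and>
            A *\<^sub>v x + B *\<^sub>v u =
              (Aa *\<^sub>v xa + Hab *\<^sub>v (Cb *\<^sub>v xb) + Had *\<^sub>v (Cd *\<^sub>v xd) + B0a *\<^sub>v y0)
              @\<^sub>v (Ab *\<^sub>v xb + Hbd *\<^sub>v (Cd *\<^sub>v xd) + B0b *\<^sub>v y0)
              @\<^sub>v (Bc *\<^sub>v (Fca *\<^sub>v xa) + Hcb *\<^sub>v (Cb *\<^sub>v xb) + Ac *\<^sub>v xc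
                    + Hcd *\<^sub>v (Cd *\<^sub>v xd) + B0c *\<^sub>v y0 + Bc *\<^sub>v uc)
              @\<^sub>v (Bd *\<^sub>v (Fda *\<^sub>v xa) + Bd *\<^sub>v (Fdb *\<^sub>v xb) + Bd *\<^sub>v (Fdc *\<^sub>v xc)
                    + Ad *\<^sub>v xd + B0d *\<^sub>v y0 + Bd *\<^sub>v ud))))"

definition Fdd_structured :: "nat list \<Rightarrow> real mat \<Rightarrow> bool" where
  "Fdd_structured qs F \<longleftrightarrow>
     (\<forall>i < length qs. \<forall>j < length qs. \<forall>k < qs ! j.
        (i \<le> j \<or> k = 0) \<longrightarrow> F $$ (i, sum_list (take j qs) + k) = 0)"

end

theory Submission
  imports Defs
begin

text \<open>Only the d-subsystem is changed, by x_d = T_d x_d', so the SCB equations for x_a, x_b, x_c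
  survive as long as C_d T_d = C_d and T_d^-1 B_d = B_d. The columns of T_d are built block by
  block: starting from the unit vector e of the last index of block j, the chain
  e, (A* + B_d P_j F_dd) e, (A* + B_d P_j F_dd)^2 e, ... (P_j keeping the rows 0, ..., j) fills the
  columns of block j from right to left. T_d is unit triangular with respect to the depth of an
  index in its block, hence invertible; it fixes B_d because its last columns are those of B_d,
  and it fixes C_d because the sizes q_j decrease. By construction
  (A* + B_d F_dd) T_d = T_d A* + B_d F' + Z C_d, where F' keeps only the entries of F_dd T_d that lie
  in rows below the block of their column and not in the first column of a block; the term
  Z C_d is absorbed into the output injection H_dd.\<close>

section \<open>Block index arithmetic\<close>

definition offset :: "nat list \<Rightarrow> nat \<Rightarrow> nat" where
  "offset qs j = sum_list (take j qs)"

fun block_of :: "nat list \<Rightarrow> nat \<Rightarrow> nat" where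
  "block_of [] r = 0"
| "block_of (q # qs) r = (if r < q then 0 else Suc (block_of qs (r - q)))"

definition depth :: "nat list \<Rightarrow> nat \<Rightarrow> nat" where
  "depth qs r = offset qs (Suc (block_of qs r)) - Suc r"

lemma offset_0 [simp]: "offset qs 0 = 0"
  by (simp add: offset_def)

lemma offset_Nil [simp]: "offset [] j = 0"
  by (simp add: offset_def)

lemma offset_Cons_Suc [simp]: "offset (q # qs) (Suc j) = q + offset qs j"
  by (simp add: offset_def)

lemma offset_Suc: "j < length qs \<Longrightarrow> offset qs (Suc j) = offset qs j + qs ! j"
  by (simp add: offset_def take_Suc_conv_app_nth)

lemma offset_le_sum_list: "offset qs j \<le> sum_list qs"
proof (induction qs arbitrary: j)
  case (Cons q qs)
  then show ?case by (cases j) auto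
qed simp

lemma offset_strict_mono:
  "\<forall>q\<in>set qs. 1 \<le> q \<Longrightarrow> i < j \<Longrightarrow> j \<le> length qs \<Longrightarrow> offset qs i < offset qs j"
proof (induction qs arbitrary: i j)
  case (Cons q qs)
  then obtain j' where "j = Suc j'" by (cases j) auto
  with Cons show ?case by (cases i) auto
qed simp

lemma block_of_bounds: "r < sum_list qs \<Longrightarrow>
   block_of qs r < length qs \<and> offset qs (block_of qs r) \<le> r \<and> r < offset qs (Suc (block_of qs r))"
proof (induction qs arbitrary: r)
  case (Cons q qs)
  show ?case
  proof (cases "r < q")
    case False
    then have "r - q < sum_list qs" using Cons.prems by simp
    from Cons.IH[OF this] False show ?thesis by auto
  qed simp
qed simp

lemma block_of_eqI:
  "j < length qs \<Longrightarrow> offset qs j \<le> r \<Longrightarrow> r < offset qs (Suc j) \<Longrightarrow> block_of qs r = j"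
proof (induction qs arbitrary: r j)
  case (Cons q qs)
  show ?case
  proof (cases j)
    case (Suc j')
    then have "\<not> r < q" "offset qs j' \<le> r - q" "r - q < offset qs (Suc j')" "j' < length qs"
      using Cons.prems by auto
    then show ?thesis using Cons.IH Suc by simp
  qed (use Cons.prems in simp)
qed simp

section \<open>Entries of the structure matrices\<close>

lemma Cdiag_carrier: "Cdiag qs \<in> carrier_mat (length qs) (sum_list qs)"
  unfolding Cdiag_def carrier_mat_def by (simp add: dim_diag_block_mat o_def C_blk_def sum_list_triv)

lemma Bdiag_carrier: "Bdiag qs \<in> carrier_mat (sum_list qs) (length qs)"
  unfolding Bdiag_def carrier_mat_def by (simp add: dim_diag_block_mat o_def B_blk_def sum_list_triv)

lemma Jdiag_carrier: "Jdiag qs \<in> carrier_mat (sum_list qs) (sum_list qs)"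
  unfolding Jdiag_def carrier_mat_def by (simp add: dim_diag_block_mat o_def J_blk_def)

lemma Cdiag_Cons:
  "Cdiag (q # qs) = four_block_mat (C_blk q) (0\<^sub>m 1 (sum_list qs)) (0\<^sub>m (length qs) q) (Cdiag qs)"
  using Cdiag_carrier[of qs] unfolding Cdiag_def by (simp add: C_blk_def)

lemma Bdiag_Cons:
  "Bdiag (q # qs) = four_block_mat (B_blk q) (0\<^sub>m q (length qs)) (0\<^sub>m (sum_list qs) 1) (Bdiag qs)"
  using Bdiag_carrier[of qs] unfolding Bdiag_def by (simp add: B_blk_def)

lemma Jdiag_Cons:
  "Jdiag (q # qs) = four_block_mat (J_blk q) (0\<^sub>m q (sum_list qs)) (0\<^sub>m (sum_list qs) q) (Jdiag qs)"
  using Jdiag_carrier[of qs] unfolding Jdiag_def by (simp add: J_blk_def)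

lemma Cdiag_index: "\<forall>q\<in>set qs. 1 \<le> q \<Longrightarrow> i < length qs \<Longrightarrow> c < sum_list qs \<Longrightarrow>
   Cdiag qs $$ (i, c) = (if c = offset qs i then 1 else 0)"
proof (induction qs arbitrary: i c)
  case (Cons q qs)
  show ?case
  proof (cases i)
    case 0
    then show ?thesis using Cons.prems Cdiag_carrier[of qs]
      by (cases "c < q") (auto simp: Cdiag_Cons C_blk_def)
  next
    case (Suc i')
    have "0 < offset (q # qs) i" using offset_strict_mono[of "q # qs" 0 i] Cons.prems Suc by auto
    then show ?thesis using Cons.prems Cons.IH[of i' "c - q"] Cdiag_carrier[of qs] Suc
      by (cases "c < q") (auto simp: Cdiag_Cons C_blk_def)
  qed
qed simp

lemma Bdiag_index: "\<forall>q\<in>set qs. 1 \<le> q \<Longrightarrow> r < sum_list qs \<Longrightarrow> i < length qs \<Longrightarrow>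
   Bdiag qs $$ (r, i) = (if Suc r = offset qs (Suc i) then 1 else 0)"
proof (induction qs arbitrary: i r)
  case (Cons q qs)
  show ?case
  proof (cases i)
    case 0
    then show ?thesis using Cons.prems Bdiag_carrier[of qs]
      by (cases "r < q") (auto simp: Bdiag_Cons B_blk_def)
  next
    case (Suc i')
    have "0 < offset qs (Suc i')" using offset_strict_mono[of qs 0 "Suc i'"] Cons.prems Suc by auto
    then show ?thesis using Cons.prems Cons.IH[of "r - q" i'] Bdiag_carrier[of qs] Suc
      by (cases "r < q") (auto simp: Bdiag_Cons B_blk_def)
  qed
qed simp

lemma Jdiag_index: "r < sum_list qs \<Longrightarrow> c < sum_list qs \<Longrightarrow>
   Jdiag qs $$ (r, c) = (if c = Suc r \<and> block_of qs c = block_of qs r then 1 else 0)"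
proof (induction qs arbitrary: r c)
  case (Cons q qs)
  show ?case
    using Cons.prems Cons.IH[of "r - q" "c - q"] Jdiag_carrier[of qs]
    by (cases "r < q"; cases "c < q") (auto simp: Jdiag_Cons J_blk_def Suc_diff_le)
qed simp

locale block_sizes =
  fixes qs :: "nat list"
  assumes block_size_pos: "\<forall>q\<in>set qs. 1 \<le> q"
begin

abbreviation "nd \<equiv> sum_list qs"
abbreviation "md \<equiv> length qs"
abbreviation "blk r \<equiv> block_of qs r"
abbreviation "off j \<equiv> offset qs j"
abbreviation "is_last r \<equiv> Suc r = off (Suc (blk r))"

lemma nth_pos: "j < md \<Longrightarrow> 1 \<le> qs ! j"
  using block_size_pos by auto

lemma block_of_offset_add: "j < md \<Longrightarrow> k < qs ! j \<Longrightarrow> blk (off j + k) = j"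
  by (rule block_of_eqI) (auto simp: offset_Suc)

lemma depth_offset_add: "j < md \<Longrightarrow> k < qs ! j \<Longrightarrow> depth qs (off j + k) = qs ! j - 1 - k"
  using block_of_offset_add by (auto simp: depth_def offset_Suc)

lemma offset_less: "j < md \<Longrightarrow> off j < nd"
  using offset_Suc[of j qs] nth_pos[of j] offset_le_sum_list[of qs "Suc j"] by simp

lemma block_of_offset: "j < md \<Longrightarrow> blk (off j) = j"
  using block_of_offset_add[of j 0] nth_pos[of j] by simp

lemma last_of_block: "j < md \<Longrightarrow>
   0 < off (Suc j) \<and> off (Suc j) - 1 < nd \<and> blk (off (Suc j) - 1) = j \<and> depth qs (off (Suc j) - 1) = 0"
  using block_of_offset_add[of j "qs ! j - 1"] depth_offset_add[of j "qs ! j - 1"] nth_pos[of j]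
    offset_Suc[of j qs] offset_le_sum_list[of qs "Suc j"]
  by auto

lemma index_in_block: "r < nd \<Longrightarrow> blk r < md \<and> off (blk r) \<le> r \<and> r < off (Suc (blk r))
   \<and> depth qs r < qs ! blk r \<and> r + depth qs r + 1 = off (Suc (blk r))"
  using block_of_bounds[of r qs] offset_Suc[of "blk r" qs] by (auto simp: depth_def)

lemma is_last_iff_depth: "r < nd \<Longrightarrow> is_last r \<longleftrightarrow> depth qs r = 0"
  using index_in_block[of r] by (auto simp: depth_def)

lemma not_last_Suc: "r < nd \<Longrightarrow> \<not> is_last r \<Longrightarrow>
   Suc r < nd \<and> blk (Suc r) = blk r \<and> depth qs r = Suc (depth qs (Suc r))"
proof -
  assume r: "r < nd" and not_last: "\<not> is_last r"
  with index_in_block[OF r] have lt: "Suc r < off (Suc (blk r))" by auto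
  have "blk (Suc r) = blk r" using index_in_block[OF r] lt by (intro block_of_eqI) auto
  moreover have "Suc r < nd"
    using lt offset_le_sum_list[of qs "Suc (blk r)"] by linarith
  ultimately show ?thesis using index_in_block[OF r] lt by (auto simp: depth_def)
qed

lemma not_first_pred: "c < nd \<Longrightarrow> c \<noteq> off (blk c) \<Longrightarrow>
   0 < c \<and> blk (c - 1) = blk c \<and> depth qs (c - 1) = Suc (depth qs c) \<and> \<not> is_last (c - 1)"
proof -
  assume c: "c < nd" and not_first: "c \<noteq> off (blk c)"
  with index_in_block[OF c] have lt: "off (blk c) < c" by auto
  have "blk (c - 1) = blk c" using index_in_block[OF c] lt by (intro block_of_eqI) auto
  then show ?thesis using lt index_in_block[OF c] by (auto simp: depth_def)
qed

lemma first_pred_is_last: "c < nd \<Longrightarrow> c = off (blk c) \<Longrightarrow> 0 < c \<Longrightarrow> is_last (c - 1)"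
proof -
  assume c: "c < nd" and first: "c = off (blk c)" and c0: "0 < c"
  then obtain j where j: "blk c = Suc j" by (cases "blk c") auto
  have jm: "j < md" using index_in_block[OF c] j by auto
  have "blk (c - 1) = j"
    using first j c0 offset_Suc[OF jm] nth_pos[OF jm] by (intro block_of_eqI[OF jm]) auto
  then show ?thesis using first j c0 by simp
qed

lemma offset_Suc_eq_imp_block: "r < nd \<Longrightarrow> i < md \<Longrightarrow> Suc r = off (Suc i) \<Longrightarrow> i = blk r"
  using offset_Suc[of i qs] nth_pos[of i] by (intro block_of_eqI[symmetric]) auto

lemma offset_eq_imp_block: "c < nd \<Longrightarrow> i < md \<Longrightarrow> c = off i \<Longrightarrow> i = blk c"
  using block_of_offset by auto

lemma Suc_same_block_iff:
  "r < nd \<Longrightarrow> c < nd \<Longrightarrow> (c = Suc r \<and> blk c = blk r) \<longleftrightarrow> (c = Suc r \<and> \<not> is_last r)"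
  using not_last_Suc[of r] index_in_block[of c] by (metis less_irrefl)

end

lemma sum_eq_single: "finite S \<Longrightarrow> a \<in> S \<Longrightarrow> (\<And>k. k \<in> S \<Longrightarrow> k \<noteq> a \<Longrightarrow> f k = 0) \<Longrightarrow> sum f S = f a"
  by (metis (mono_tags, lifting) sum.remove sum.neutral DiffE insertI1 add.right_neutral)

context block_sizes
begin

lemma Cdiag_mult_index:
  assumes X: "X \<in> carrier_mat nd k" and i: "i < md" and c: "c < k"
  shows "(Cdiag qs * X) $$ (i, c) = X $$ (off i, c)"
proof -
  have "(Cdiag qs * X) $$ (i, c) = (\<Sum>t\<in>{0..<nd}. Cdiag qs $$ (i, t) * X $$ (t, c))"
    using X i c Cdiag_carrier[of qs] by (auto simp: scalar_prod_def)
  also have "\<dots> = Cdiag qs $$ (i, off i) * X $$ (off i, c)"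
    by (rule sum_eq_single) (use offset_less[OF i] i block_size_pos in \<open>auto simp: Cdiag_index\<close>)
  finally show ?thesis using offset_less[OF i] i block_size_pos by (simp add: Cdiag_index)
qed

lemma mult_Bdiag_index:
  assumes X: "X \<in> carrier_mat k nd" and i: "i < md" and r: "r < k"
  shows "(X * Bdiag qs) $$ (r, i) = X $$ (r, off (Suc i) - 1)"
proof -
  have last: "0 < off (Suc i)" "off (Suc i) - 1 < nd" using last_of_block[OF i] by auto
  have "(X * Bdiag qs) $$ (r, i) = (\<Sum>t\<in>{0..<nd}. X $$ (r, t) * Bdiag qs $$ (t, i))"
    using X i r Bdiag_carrier[of qs] by (auto simp: scalar_prod_def)
  also have "\<dots> = X $$ (r, off (Suc i) - 1) * Bdiag qs $$ (off (Suc i) - 1, i)"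
    by (rule sum_eq_single) (use last i block_size_pos in \<open>auto simp: Bdiag_index\<close>)
  finally show ?thesis using last i block_size_pos by (simp add: Bdiag_index)
qed

lemma Bdiag_mult_index:
  assumes Y: "Y \<in> carrier_mat md k" and r: "r < nd" and c: "c < k"
  shows "(Bdiag qs * Y) $$ (r, c) = (if is_last r then Y $$ (blk r, c) else 0)"
proof -
  have "(Bdiag qs * Y) $$ (r, c) = (\<Sum>t\<in>{0..<md}. Bdiag qs $$ (r, t) * Y $$ (t, c))"
    using Y r c Bdiag_carrier[of qs] by (auto simp: scalar_prod_def)
  also have "\<dots> = (if is_last r then Y $$ (blk r, c) else 0)"
  proof (cases "is_last r")
    case True
    have "(\<Sum>t\<in>{0..<md}. Bdiag qs $$ (r, t) * Y $$ (t, c)) = Bdiag qs $$ (r, blk r) * Y $$ (blk r, c)"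
      by (rule sum_eq_single)
        (use r index_in_block[OF r] block_size_pos offset_Suc_eq_imp_block[OF r] in \<open>auto simp: Bdiag_index\<close>)
    then show ?thesis using True r index_in_block[OF r] block_size_pos by (simp add: Bdiag_index)
  next
    case False
    then show ?thesis
      using r block_size_pos offset_Suc_eq_imp_block[OF r] by (auto simp: Bdiag_index intro!: sum.neutral)
  qed
  finally show ?thesis .
qed

lemma mult_Cdiag_index:
  assumes Y: "Y \<in> carrier_mat k md" and r: "r < k" and c: "c < nd"
  shows "(Y * Cdiag qs) $$ (r, c) = (if c = off (blk c) then Y $$ (r, blk c) else 0)"
proof -
  have "(Y * Cdiag qs) $$ (r, c) = (\<Sum>t\<in>{0..<md}. Y $$ (r, t) * Cdiag qs $$ (t, c))"
    using Y r c Cdiag_carrier[of qs] by (auto simp: scalar_prod_def)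
  also have "\<dots> = (if c = off (blk c) then Y $$ (r, blk c) else 0)"
  proof (cases "c = off (blk c)")
    case True
    have "(\<Sum>t\<in>{0..<md}. Y $$ (r, t) * Cdiag qs $$ (t, c)) = Y $$ (r, blk c) * Cdiag qs $$ (blk c, c)"
      by (rule sum_eq_single)
        (use c index_in_block[OF c] block_size_pos offset_eq_imp_block[OF c] in \<open>auto simp: Cdiag_index\<close>)
    then show ?thesis using True c index_in_block[OF c] block_size_pos by (simp add: Cdiag_index)
  next
    case False
    then show ?thesis
      using c block_size_pos offset_eq_imp_block[OF c] by (auto simp: Cdiag_index intro!: sum.neutral)
  qed
  finally show ?thesis .
qed

lemma Jdiag_mult_index:
  assumes X: "X \<in> carrier_mat nd k" and r: "r < nd" and c: "c < k"
  shows "(Jdiag qs * X) $$ (r, c) = (if is_last r then 0 else X $$ (Suc r, c))"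
proof -
  have "(Jdiag qs * X) $$ (r, c) = (\<Sum>t\<in>{0..<nd}. Jdiag qs $$ (r, t) * X $$ (t, c))"
    using X r c Jdiag_carrier[of qs] by (auto simp: scalar_prod_def)
  also have "\<dots> = (if is_last r then 0 else X $$ (Suc r, c))"
  proof (cases "is_last r")
    case False
    have sr: "Suc r < nd" using not_last_Suc[OF r False] by auto
    have "(\<Sum>t\<in>{0..<nd}. Jdiag qs $$ (r, t) * X $$ (t, c)) = Jdiag qs $$ (r, Suc r) * X $$ (Suc r, c)"
      by (rule sum_eq_single) (use r sr in \<open>auto simp: Jdiag_index\<close>)
    then show ?thesis using False r sr Suc_same_block_iff[OF r sr] by (simp add: Jdiag_index)
  next
    case True
    have "Jdiag qs $$ (r, t) = 0" if t: "t < nd" for t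
      using Suc_same_block_iff[OF r t] True t r by (simp add: Jdiag_index)
    then show ?thesis using True by (auto intro!: sum.neutral)
  qed
  finally show ?thesis .
qed

lemma mult_Jdiag_index:
  assumes X: "X \<in> carrier_mat k nd" and r: "r < k" and c: "c < nd"
  shows "(X * Jdiag qs) $$ (r, c) = (if c = off (blk c) then 0 else X $$ (r, c - 1))"
proof -
  have "(X * Jdiag qs) $$ (r, c) = (\<Sum>t\<in>{0..<nd}. X $$ (r, t) * Jdiag qs $$ (t, c))"
    using X r c Jdiag_carrier[of qs] by (auto simp: scalar_prod_def)
  also have "\<dots> = (if c = off (blk c) then 0 else X $$ (r, c - 1))"
  proof (cases "c = off (blk c)")
    case False
    have pred: "c - 1 < nd" "0 < c" "blk (c - 1) = blk c" using not_first_pred[OF c False] c by auto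
    have "(\<Sum>t\<in>{0..<nd}. X $$ (r, t) * Jdiag qs $$ (t, c)) = X $$ (r, c - 1) * Jdiag qs $$ (c - 1, c)"
      by (rule sum_eq_single) (use c pred in \<open>auto simp: Jdiag_index\<close>)
    then show ?thesis using False c pred by (simp add: Jdiag_index)
  next
    case True
    have "Jdiag qs $$ (t, c) = 0" if t: "t < nd" for t
    proof -
      have "\<not> (c = Suc t \<and> blk c = blk t)"
        using first_pred_is_last[OF c True] Suc_same_block_iff[OF t c] by auto
      then show ?thesis using t c by (simp add: Jdiag_index)
    qed
    then show ?thesis using True by (auto intro!: sum.neutral)
  qed
  finally show ?thesis .
qed

end

section \<open>The normalizing transformation\<close>

text \<open>chain_vec qs F j d = (Jdiag qs + Bdiag qs * P_j * F)^d e, where e is the unit vector of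
  the last index of block j and P_j keeps only the rows 0, ..., j of F.\<close>

primrec chain_vec :: "nat list \<Rightarrow> real mat \<Rightarrow> nat \<Rightarrow> nat \<Rightarrow> real vec" where
  "chain_vec qs F j 0 = vec (sum_list qs) (\<lambda>r. if Suc r = offset qs (Suc j) then 1 else 0)"
| "chain_vec qs F j (Suc d) = vec (sum_list qs) (\<lambda>r.
     if Suc r = offset qs (Suc (block_of qs r))
     then (if block_of qs r \<le> j then row F (block_of qs r) \<bullet> chain_vec qs F j d else 0)
     else chain_vec qs F j d $ Suc r)"

definition normalizer :: "nat list \<Rightarrow> real mat \<Rightarrow> real mat" where
  "normalizer qs F = mat (sum_list qs) (sum_list qs)
     (\<lambda>(r, c). chain_vec qs F (block_of qs c) (depth qs c) $ r)"

definition reduced_feedback :: "nat list \<Rightarrow> real mat \<Rightarrow> real mat" where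
  "reduced_feedback qs F = mat (length qs) (sum_list qs) (\<lambda>(i, c).
     if block_of qs c < i \<and> c \<noteq> offset qs (block_of qs c) then (F * normalizer qs F) $$ (i, c) else 0)"

lemma dim_chain_vec [simp]: "dim_vec (chain_vec qs F j d) = sum_list qs"
  by (cases d) auto

lemma normalizer_carrier: "normalizer qs F \<in> carrier_mat (sum_list qs) (sum_list qs)"
  unfolding normalizer_def by (rule mat_carrier)

lemma reduced_feedback_carrier: "reduced_feedback qs F \<in> carrier_mat (length qs) (sum_list qs)"
  unfolding reduced_feedback_def by (rule mat_carrier)

context block_sizes
begin

lemma index_at_depth: "j < md \<Longrightarrow> d < qs ! j \<Longrightarrow>
   off (Suc j) - 1 - d < nd \<and> blk (off (Suc j) - 1 - d) = j \<and> depth qs (off (Suc j) - 1 - d) = d"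
proof -
  assume j: "j < md" and d: "d < qs ! j"
  have eq: "off (Suc j) - 1 - d = off j + (qs ! j - 1 - d)" using offset_Suc[OF j] d by simp
  have k: "qs ! j - 1 - d < qs ! j" using nth_pos[OF j] by simp
  show ?thesis unfolding eq
    using block_of_offset_add[OF j k] depth_offset_add[OF j k] d offset_le_sum_list[of qs "Suc j"]
      offset_Suc[OF j]
    by auto
qed

lemma chain_vec_support: "j < md \<Longrightarrow> d < qs ! j \<Longrightarrow>
   chain_vec qs F j d $ (off (Suc j) - 1 - d) = 1 \<and>
   (\<forall>r<nd. chain_vec qs F j d $ r \<noteq> 0 \<longrightarrow>
      r = off (Suc j) - 1 - d \<or> (blk r \<le> j \<and> depth qs r < d))"
proof (induction d)
  case 0
  then show ?case using last_of_block[OF "0"(1)] by auto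
next
  case (Suc d)
  note j = Suc.prems(1)
  have IH: "chain_vec qs F j d $ (off (Suc j) - 1 - d) = 1 \<and>
   (\<forall>r<nd. chain_vec qs F j d $ r \<noteq> 0 \<longrightarrow> r = off (Suc j) - 1 - d \<or> (blk r \<le> j \<and> depth qs r < d))"
    using Suc by simp
  define r0 where "r0 = off (Suc j) - 1 - Suc d"
  note r0 = index_at_depth[OF j Suc.prems(2), folded r0_def]
  have not_last: "\<not> is_last r0" using is_last_iff_depth r0 by auto
  have Suc_r0: "Suc r0 = off (Suc j) - 1 - d"
    using offset_Suc[OF j] Suc.prems(2) unfolding r0_def by linarith
  have "chain_vec qs F j (Suc d) $ r0 = 1" using r0 not_last Suc_r0 IH by simp
  moreover have "r = r0 \<or> (blk r \<le> j \<and> depth qs r < Suc d)"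
    if r: "r < nd" and nz: "chain_vec qs F j (Suc d) $ r \<noteq> 0" for r
  proof (cases "is_last r")
    case True
    then show ?thesis using nz r is_last_iff_depth[OF r] by (auto split: if_splits)
  next
    case False
    note next_index = not_last_Suc[OF r False]
    have "chain_vec qs F j d $ Suc r \<noteq> 0" using nz r False by simp
    then have "Suc r = off (Suc j) - 1 - d \<or> (blk (Suc r) \<le> j \<and> depth qs (Suc r) < d)"
      using IH next_index by blast
    then show ?thesis using next_index Suc_r0 by auto
  qed
  ultimately show ?case unfolding r0_def by blast
qed

lemma normalizer_index: "r < nd \<Longrightarrow> c < nd \<Longrightarrow>
   normalizer qs F $$ (r, c) = chain_vec qs F (blk c) (depth qs c) $ r"
  by (simp add: normalizer_def)

lemma col_normalizer: "c < nd \<Longrightarrow> col (normalizer qs F) c = chain_vec qs F (blk c) (depth qs c)"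
  by (rule eq_vecI) (auto simp: normalizer_def)

lemma normalizer_col_support: "c < nd \<Longrightarrow>
   normalizer qs F $$ (c, c) = 1 \<and>
   (\<forall>r<nd. normalizer qs F $$ (r, c) \<noteq> 0 \<longrightarrow> r = c \<or> (blk r \<le> blk c \<and> depth qs r < depth qs c))"
proof -
  assume c: "c < nd"
  have c_eq: "off (Suc (blk c)) - 1 - depth qs c = c" using index_in_block[OF c] by linarith
  show ?thesis
    using chain_vec_support[of "blk c" "depth qs c", unfolded c_eq] index_in_block[OF c] c
    by (simp add: normalizer_index)
qed

lemma normalizer_diag: "c < nd \<Longrightarrow> normalizer qs F $$ (c, c) = 1"
  using normalizer_col_support by blast

lemma normalizer_off_diag: "r < nd \<Longrightarrow> c < nd \<Longrightarrow> normalizer qs F $$ (r, c) \<noteq> 0 \<Longrightarrow> r \<noteq> c \<Longrightarrow>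
   blk r \<le> blk c \<and> depth qs r < depth qs c"
  using normalizer_col_support by blast

end

locale d_block = block_sizes +
  fixes F :: "real mat"
  assumes F_carrier: "F \<in> carrier_mat md nd" and decreasing: "sorted_wrt (\<ge>) qs"
begin

abbreviation "T \<equiv> normalizer qs F"

lemma T_carrier: "T \<in> carrier_mat nd nd"
  by (rule normalizer_carrier)

lemma Cdiag_mult_normalizer: "Cdiag qs * T = Cdiag qs"
proof (rule eq_matI)
  fix i c assume "i < dim_row (Cdiag qs)" and "c < dim_col (Cdiag qs)"
  then have i: "i < md" and c: "c < nd" using Cdiag_carrier[of qs] by auto
  have "T $$ (off i, c) = 0" if ne: "c \<noteq> off i"
  proof (rule ccontr)
    assume "T $$ (off i, c) \<noteq> 0"
    from normalizer_off_diag[OF offset_less[OF i] c this] ne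
    have le: "i \<le> blk c" and lt: "qs ! i - 1 < depth qs c"
      using block_of_offset[OF i] depth_offset_add[of i 0] nth_pos[OF i] i by auto
    have "qs ! blk c \<le> qs ! i"
      using le index_in_block[OF c] decreasing sorted_wrt_nth_less[of "(\<ge>)" qs i "blk c"]
      by (cases "i = blk c") auto
    with lt index_in_block[OF c] show False by linarith
  qed
  then have "T $$ (off i, c) = (if c = off i then 1 else 0)" using normalizer_diag[OF c] by auto
  then show "(Cdiag qs * T) $$ (i, c) = Cdiag qs $$ (i, c)"
    using Cdiag_mult_index[OF T_carrier i c] Cdiag_index[OF block_size_pos i c] by simp
qed (use Cdiag_carrier[of qs] T_carrier in auto)

lemma normalizer_mult_Bdiag: "T * Bdiag qs = Bdiag qs"
proof (rule eq_matI)
  fix r i assume "r < dim_row (Bdiag qs)" and "i < dim_col (Bdiag qs)"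
  then have r: "r < nd" and i: "i < md" using Bdiag_carrier[of qs] by auto
  have "(T * Bdiag qs) $$ (r, i) = T $$ (r, off (Suc i) - 1)"
    by (rule mult_Bdiag_index[OF T_carrier i r])
  also have "\<dots> = chain_vec qs F i 0 $ r"
    using normalizer_index[OF r, of "off (Suc i) - 1"] last_of_block[OF i] by simp
  also have "\<dots> = Bdiag qs $$ (r, i)" using Bdiag_index[OF block_size_pos r i] r by simp
  finally show "(T * Bdiag qs) $$ (r, i) = Bdiag qs $$ (r, i)" .
qed (use Bdiag_carrier[of qs] T_carrier in auto)

text \<open>If T v = 0 with v \<noteq> 0, the row of T at a support index of v of maximal depth picks out a
  single nonzero term, since T is unit triangular with respect to depth.\<close>

lemma det_normalizer: "det T \<noteq> 0"
proof
  assume "det T = 0"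
  then obtain v where v: "v \<in> carrier_vec nd" "v \<noteq> 0\<^sub>v nd" "T *\<^sub>v v = 0\<^sub>v nd"
    using det_0_iff_vec_prod_zero[OF T_carrier] by blast
  define S where "S = {c. c < nd \<and> v $ c \<noteq> 0}"
  have fin: "finite S" unfolding S_def by simp
  have "S \<noteq> {}"
  proof
    assume "S = {}"
    then have "v = 0\<^sub>v nd" using v(1) unfolding S_def by (intro eq_vecI) auto
    with v(2) show False by simp
  qed
  then have "Max (depth qs ` S) \<in> depth qs ` S" using fin by (intro Max_in) auto
  then obtain c where cS: "c \<in> S" and c_max: "depth qs c = Max (depth qs ` S)" by auto
  have max: "depth qs c' \<le> depth qs c" if "c' \<in> S" for c'
    unfolding c_max using fin that by (intro Max_ge) auto
  have c: "c < nd" and vc: "v $ c \<noteq> 0" using cS unfolding S_def by auto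
  have "(T *\<^sub>v v) $ c = (\<Sum>k\<in>{0..<nd}. T $$ (c, k) * v $ k)"
    using c v(1) T_carrier by (auto simp: scalar_prod_def)
  also have "\<dots> = T $$ (c, c) * v $ c"
  proof (rule sum_eq_single)
    fix k assume k: "k \<in> {0..<nd}" and kc: "k \<noteq> c"
    show "T $$ (c, k) * v $ k = 0"
    proof (cases "v $ k = 0")
      case False
      then have "depth qs k \<le> depth qs c" using k max unfolding S_def by auto
      then show ?thesis using normalizer_off_diag[of c k] c k kc by fastforce
    qed simp
  qed (use c in auto)
  also have "\<dots> = v $ c" using normalizer_diag[OF c] by simp
  finally show False using vc v(3) c by simp
qed

lemma normalizer_invertible: "\<exists>Ti. Ti \<in> carrier_mat nd nd \<and> T * Ti = 1\<^sub>m nd \<and> Ti * T = 1\<^sub>m nd"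
proof -
  have "T \<in> Units (ring_mat TYPE(real) nd ())"
    by (rule det_non_zero_imp_unit[OF T_carrier det_normalizer])
  then show ?thesis unfolding Units_def by (auto simp: ring_mat_simps)
qed

lemma Fdd_structured_reduced_feedback: "Fdd_structured qs (reduced_feedback qs F)"
  unfolding Fdd_structured_def
proof (intro allI impI)
  fix i j k assume i: "i < md" and j: "j < md" and k: "k < qs ! j" and small: "i \<le> j \<or> k = 0"
  have "off j + k < nd" using offset_Suc[OF j] offset_le_sum_list[of qs "Suc j"] k by simp
  then show "reduced_feedback qs F $$ (i, sum_list (take j qs) + k) = 0"
    using i small block_of_offset_add[OF j k] unfolding offset_def[symmetric]
    by (auto simp: reduced_feedback_def)
qed

end

context d_block
begin

text \<open>Applying Jdiag qs + Bdiag qs * F to column c of T gives column c - 1 of T plus the rows of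
  F * T below block blk c, which form the reduced feedback; for the first column of a block the
  result is absorbed by Z * Cdiag qs.\<close>

lemma closed_loop_normalizer:
  "\<exists>Z. Z \<in> carrier_mat nd md \<and>
     Jdiag qs * T + Bdiag qs * (F * T) = T * Jdiag qs + Bdiag qs * reduced_feedback qs F + Z * Cdiag qs"
proof (intro exI conjI)
  let ?L = "Jdiag qs * T + Bdiag qs * (F * T)" and ?F' = "reduced_feedback qs F"
  define Z where "Z = mat nd md (\<lambda>(r, j). ?L $$ (r, off j))"
  show Z: "Z \<in> carrier_mat nd md" by (simp add: Z_def)
  have FT: "F * T \<in> carrier_mat md nd" using F_carrier T_carrier by auto
  have L: "?L \<in> carrier_mat nd nd"
    using Jdiag_carrier[of qs] Bdiag_carrier[of qs] T_carrier FT by auto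
  have R: "T * Jdiag qs + Bdiag qs * ?F' + Z * Cdiag qs \<in> carrier_mat nd nd"
    using Jdiag_carrier[of qs] Bdiag_carrier[of qs] Cdiag_carrier[of qs] T_carrier Z by auto
  show "?L = T * Jdiag qs + Bdiag qs * ?F' + Z * Cdiag qs"
  proof (rule eq_matI)
    fix r c assume "r < dim_row (T * Jdiag qs + Bdiag qs * ?F' + Z * Cdiag qs)"
      and "c < dim_col (T * Jdiag qs + Bdiag qs * ?F' + Z * Cdiag qs)"
    then have r: "r < nd" and c: "c < nd" using R by auto
    have lhs: "?L $$ (r, c) = (if is_last r then (F * T) $$ (blk r, c) else T $$ (Suc r, c))"
      using r c Jdiag_carrier[of qs] Bdiag_carrier[of qs] T_carrier FT
        Jdiag_mult_index[OF T_carrier r c] Bdiag_mult_index[OF FT r c] by simp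
    have rhs: "(T * Jdiag qs + Bdiag qs * ?F' + Z * Cdiag qs) $$ (r, c) =
       (if c = off (blk c) then Z $$ (r, blk c) else T $$ (r, c - 1))
       + (if is_last r then ?F' $$ (blk r, c) else 0)"
      using mult_Jdiag_index[OF T_carrier r c] Bdiag_mult_index[OF reduced_feedback_carrier r c]
        mult_Cdiag_index[OF Z r c] r c Z Jdiag_carrier[of qs] Bdiag_carrier[of qs]
        Cdiag_carrier[of qs] T_carrier reduced_feedback_carrier[of qs F]
      by simp
    have blocks: "blk r < md" "blk c < md" using index_in_block r c by auto
    show "?L $$ (r, c) = (T * Jdiag qs + Bdiag qs * ?F' + Z * Cdiag qs) $$ (r, c)"
    proof (cases "c = off (blk c)")
      case True
      then show ?thesis unfolding rhs using r c blocks by (simp add: Z_def reduced_feedback_def)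
    next
      case False
      note pred = not_first_pred[OF c False]
      have T_pred: "T $$ (r, c - 1) = chain_vec qs F (blk c) (Suc (depth qs c)) $ r"
        using normalizer_index[OF r, of "c - 1"] pred c by simp
      have "(F * T) $$ (blk r, c) = row F (blk r) \<bullet> chain_vec qs F (blk c) (depth qs c)"
        using F_carrier blocks c col_normalizer[OF c] T_carrier by simp
      moreover have "?F' $$ (blk r, c) = (if blk c < blk r then (F * T) $$ (blk r, c) else 0)"
        using False blocks c by (simp add: reduced_feedback_def)
      moreover have "T $$ (Suc r, c) = chain_vec qs F (blk c) (depth qs c) $ Suc r"
        if "\<not> is_last r" using normalizer_index not_last_Suc[OF r that] c by simp
      ultimately show ?thesis unfolding lhs rhs T_pred using False r by auto
    qed
  qed (simp_all only: carrier_matD[OF L] carrier_matD[OF R])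
qed

lemma left_inverse_mult_Bdiag:
  assumes "Ti \<in> carrier_mat nd nd" "Ti * T = 1\<^sub>m nd"
  shows "Ti * Bdiag qs = Bdiag qs"
  using normalizer_mult_Bdiag assoc_mult_mat[OF assms(1) T_carrier Bdiag_carrier] assms(2) Bdiag_carrier
  by (metis left_mult_one_mat)

lemma normalizer_similarity:
  assumes H: "H \<in> carrier_mat nd md" and Ti: "Ti \<in> carrier_mat nd nd" "Ti * T = 1\<^sub>m nd"
  shows "\<exists>H'. H' \<in> carrier_mat nd md \<and>
    Ti * (Jdiag qs + Bdiag qs * F + H * Cdiag qs) * T = Jdiag qs + Bdiag qs * reduced_feedback qs F + H' * Cdiag qs"
proof -
  obtain Z where Z: "Z \<in> carrier_mat nd md"
    and closed_loop: "Jdiag qs * T + Bdiag qs * (F * T) = T * Jdiag qs + Bdiag qs * reduced_feedback qs F + Z * Cdiag qs"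
    using closed_loop_normalizer by blast
  note Ti_Bd = left_inverse_mult_Bdiag[OF Ti]
  have J: "Jdiag qs \<in> carrier_mat nd nd" and B: "Bdiag qs \<in> carrier_mat nd md"
    and C: "Cdiag qs \<in> carrier_mat md nd" and F': "reduced_feedback qs F \<in> carrier_mat md nd"
    by (rule Jdiag_carrier Bdiag_carrier Cdiag_carrier reduced_feedback_carrier)+
  have BF: "Bdiag qs * F \<in> carrier_mat nd nd" and HC: "H * Cdiag qs \<in> carrier_mat nd nd"
    and ZC: "Z * Cdiag qs \<in> carrier_mat nd nd" and BF': "Bdiag qs * reduced_feedback qs F \<in> carrier_mat nd nd"
    and TJ: "T * Jdiag qs \<in> carrier_mat nd nd"
    by (rule mult_carrier_mat, (rule B F_carrier H C Z F' T_carrier J)+)+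
  have "(Jdiag qs + Bdiag qs * F + H * Cdiag qs) * T = (Jdiag qs * T + Bdiag qs * (F * T)) + H * (Cdiag qs * T)"
    by (simp only: add_mult_distrib_mat[OF add_carrier_mat[OF BF] HC T_carrier]
        add_mult_distrib_mat[OF J BF T_carrier] assoc_mult_mat[OF B F_carrier T_carrier]
        assoc_mult_mat[OF H C T_carrier])
  also have "\<dots> = T * Jdiag qs + Bdiag qs * reduced_feedback qs F + (Z + H) * Cdiag qs"
    by (simp only: closed_loop Cdiag_mult_normalizer add_mult_distrib_mat[OF Z H C]
        assoc_add_mat[OF add_carrier_mat[OF BF'] ZC HC])
  finally have "Ti * (Jdiag qs + Bdiag qs * F + H * Cdiag qs) * T
      = Ti * (T * Jdiag qs) + Ti * (Bdiag qs * reduced_feedback qs F) + Ti * ((Z + H) * Cdiag qs)"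
    by (simp only: assoc_mult_mat[OF Ti(1) add_carrier_mat[OF HC] T_carrier]
        mult_add_distrib_mat[OF Ti(1) add_carrier_mat[OF BF'] mult_carrier_mat[OF add_carrier_mat[OF H] C]]
        mult_add_distrib_mat[OF Ti(1) TJ BF'])
  also have "\<dots> = Jdiag qs + Bdiag qs * reduced_feedback qs F + (Ti * (Z + H)) * Cdiag qs"
    by (simp only: assoc_mult_mat[OF Ti(1) T_carrier J, symmetric] assoc_mult_mat[OF Ti(1) B F', symmetric]
        assoc_mult_mat[OF Ti(1) add_carrier_mat[OF H] C, symmetric] Ti(2) Ti_Bd left_mult_one_mat[OF J])
  finally have "Ti * (Jdiag qs + Bdiag qs * F + H * Cdiag qs) * T
      = Jdiag qs + Bdiag qs * reduced_feedback qs F + (Ti * (Z + H)) * Cdiag qs" .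
  moreover have "Ti * (Z + H) \<in> carrier_mat nd md"
    by (rule mult_carrier_mat[OF Ti(1) add_carrier_mat[OF H]])
  ultimately show ?thesis by (intro exI[of _ "Ti * (Z + H)"] conjI)
qed

end

section \<open>Changing coordinates of the d-subsystem\<close>

abbreviation state_transform :: "nat \<Rightarrow> nat \<Rightarrow> 'a :: semiring_1 mat \<Rightarrow> 'a mat" where
  "state_transform N n T \<equiv> four_block_mat (1\<^sub>m N) (0\<^sub>m N n) (0\<^sub>m n N) T"

lemma append_vec_assoc: "(u @\<^sub>v v) @\<^sub>v w = u @\<^sub>v (v @\<^sub>v w)"
  by (rule eq_vecI) (auto simp: add.assoc)

lemma state_transform_mult_vec:
  fixes T :: "'a :: semiring_1 mat"
  assumes "T \<in> carrier_mat n n" "p \<in> carrier_vec N" "w \<in> carrier_vec n"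
  shows "state_transform N n T *\<^sub>v (p @\<^sub>v w) = p @\<^sub>v (T *\<^sub>v w)"
proof -
  have "(0\<^sub>m n N :: 'a mat) *\<^sub>v p = 0\<^sub>v n" "(0\<^sub>m N n :: 'a mat) *\<^sub>v w = 0\<^sub>v N"
    using assms by auto
  then show ?thesis using assms by (simp add: four_block_mat_mult_vec[of _ N N _ n _ n])
qed

lemma state_transform_mult_vec4:
  fixes T :: "'a :: semiring_1 mat"
  assumes "T \<in> carrier_mat nd nd" "xa \<in> carrier_vec na" "xb \<in> carrier_vec nb"
    "xc \<in> carrier_vec nc" "xd \<in> carrier_vec nd"
  shows "state_transform (na+nb+nc) nd T *\<^sub>v (xa @\<^sub>v xb @\<^sub>v xc @\<^sub>v xd) = xa @\<^sub>v xb @\<^sub>v xc @\<^sub>v (T *\<^sub>v xd)"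
  using state_transform_mult_vec[of T nd "xa @\<^sub>v xb @\<^sub>v xc" "na+nb+nc" xd] assms
  by (simp add: append_vec_assoc add.assoc)

lemma state_transform_conj_mult_vec:
  fixes T :: "'a :: semiring_1 mat"
  assumes A: "A \<in> carrier_mat (na+nb+nc+nd) (na+nb+nc+nd)" and B: "B \<in> carrier_mat (na+nb+nc+nd) k"
    and T: "T \<in> carrier_mat nd nd" and Ti: "Ti \<in> carrier_mat nd nd"
    and x: "xa \<in> carrier_vec na" "xb \<in> carrier_vec nb" "xc \<in> carrier_vec nc" "xd \<in> carrier_vec nd"
    and u: "u \<in> carrier_vec k"
  shows "(state_transform (na+nb+nc) nd Ti * A * state_transform (na+nb+nc) nd T) *\<^sub>v (xa @\<^sub>v xb @\<^sub>v xc @\<^sub>v xd)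
           + (state_transform (na+nb+nc) nd Ti * B) *\<^sub>v u
         = state_transform (na+nb+nc) nd Ti *\<^sub>v (A *\<^sub>v (xa @\<^sub>v xb @\<^sub>v xc @\<^sub>v T *\<^sub>v xd) + B *\<^sub>v u)"
proof -
  let ?Ts = "state_transform (na+nb+nc) nd T" and ?Tsi = "state_transform (na+nb+nc) nd Ti"
  have Ts: "?Ts \<in> carrier_mat (na+nb+nc+nd) (na+nb+nc+nd)" and Tsi: "?Tsi \<in> carrier_mat (na+nb+nc+nd) (na+nb+nc+nd)"
    using T Ti by auto
  have x4: "xa @\<^sub>v xb @\<^sub>v xc @\<^sub>v xd \<in> carrier_vec (na+nb+nc+nd)"
    and x4': "xa @\<^sub>v xb @\<^sub>v xc @\<^sub>v T *\<^sub>v xd \<in> carrier_vec (na+nb+nc+nd)"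
    using x T by (simp_all add: add.assoc)
  have "(?Tsi * A * ?Ts) *\<^sub>v (xa @\<^sub>v xb @\<^sub>v xc @\<^sub>v xd) + (?Tsi * B) *\<^sub>v u =
      ?Tsi *\<^sub>v (A *\<^sub>v (xa @\<^sub>v xb @\<^sub>v xc @\<^sub>v T *\<^sub>v xd)) + ?Tsi *\<^sub>v (B *\<^sub>v u)"
    using assoc_mult_mat_vec[OF mult_carrier_mat[OF Tsi A] Ts x4]
      assoc_mult_mat_vec[OF Tsi A mult_mat_vec_carrier[OF Ts x4]] assoc_mult_mat_vec[OF Tsi B u]
    by (simp only: state_transform_mult_vec4[OF T x])
  also have "\<dots> = ?Tsi *\<^sub>v (A *\<^sub>v (xa @\<^sub>v xb @\<^sub>v xc @\<^sub>v T *\<^sub>v xd) + B *\<^sub>v u)"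
    using mult_add_distrib_mat_vec[OF Tsi mult_mat_vec_carrier[OF A x4'] mult_mat_vec_carrier[OF B u]] ..
  finally show ?thesis .
qed

lemma is_SCB_transform_xd:
  assumes scb: "is_SCB A B C D na nb nc nd m0 md mc pb ls qs F"
    and T: "T \<in> carrier_mat nd nd" and Ti: "Ti \<in> carrier_mat nd nd"
    and CT: "Cdiag qs * T = Cdiag qs" and TiB: "Ti * Bdiag qs = Bdiag qs"
    and F': "F' \<in> carrier_mat md nd"
    and similar: "\<And>H. H \<in> carrier_mat nd md \<Longrightarrow> \<exists>H'. H' \<in> carrier_mat nd md \<and>
        Ti * (Jdiag qs + Bdiag qs * F + H * Cdiag qs) * T = Jdiag qs + Bdiag qs * F' + H' * Cdiag qs"
  shows "is_SCB (state_transform (na+nb+nc) nd Ti * A * state_transform (na+nb+nc) nd T)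
                (state_transform (na+nb+nc) nd Ti * B) (C * state_transform (na+nb+nc) nd T) D
                na nb nc nd m0 md mc pb ls qs F'"
  using scb unfolding is_SCB_def Let_def
proof (elim conjE exE, goal_cases)
  case (1 C0a C0b C0c C0d Aa Hab Had B0a Hbb Hbd B0b Fca Hcb Ac Hcd B0c Bc Fda Fdb Fdc Hdd B0d)
  note sizes = "1"(1-12) and blocks = "1"(13-34) and old = "1"(35)[rule_format]
  obtain H' where H': "H' \<in> carrier_mat nd md"
    and Ad: "Ti * (Jdiag qs + Bdiag qs * F + Hdd * Cdiag qs) * T = Jdiag qs + Bdiag qs * F' + H' * Cdiag qs"
    using similar[OF "1"(33)] by blast
  have diag_carriers: "Cdiag qs \<in> carrier_mat md nd" "Bdiag qs \<in> carrier_mat nd md" "Jdiag qs \<in> carrier_mat nd nd"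
    "Cdiag ls \<in> carrier_mat pb nb" "Jdiag ls \<in> carrier_mat nb nb"
    using Cdiag_carrier Bdiag_carrier Jdiag_carrier sizes by auto
  have Ab: "Jdiag ls + Hbb * Cdiag ls \<in> carrier_mat nb nb"
    and Ad_carrier: "Jdiag qs + Bdiag qs * F + Hdd * Cdiag qs \<in> carrier_mat nd nd"
    using diag_carriers blocks sizes by auto
  let ?Ts = "state_transform (na+nb+nc) nd T" and ?Tsi = "state_transform (na+nb+nc) nd Ti"
  have Ts: "?Ts \<in> carrier_mat (na+nb+nc+nd) (na+nb+nc+nd)" and Tsi: "?Tsi \<in> carrier_mat (na+nb+nc+nd) (na+nb+nc+nd)"
    using T Ti by auto
  have Cd_T: "Cdiag qs *\<^sub>v (T *\<^sub>v xd) = Cdiag qs *\<^sub>v xd" if "xd \<in> carrier_vec nd" for xd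
    using CT T that by (metis assoc_mult_mat_vec sizes(7) Cdiag_carrier)
  have Ti_Bd: "Ti *\<^sub>v (Bdiag qs *\<^sub>v v) = Bdiag qs *\<^sub>v v" if "v \<in> carrier_vec md" for v
    using TiB Ti that by (metis assoc_mult_mat_vec sizes(4,7) Bdiag_carrier)
  have new_eqs: "(C * ?Ts) *\<^sub>v (xa @\<^sub>v xb @\<^sub>v xc @\<^sub>v xd) + D *\<^sub>v (u0 @\<^sub>v ud @\<^sub>v uc) =
        (C0a *\<^sub>v xa + C0b *\<^sub>v xb + C0c *\<^sub>v xc + (C0d * T) *\<^sub>v xd + u0) @\<^sub>v
         Cdiag qs *\<^sub>v xd @\<^sub>v Cdiag ls *\<^sub>v xb"
    if "xa \<in> carrier_vec na" "xb \<in> carrier_vec nb" "xc \<in> carrier_vec nc" "xd \<in> carrier_vec nd"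
       "u0 \<in> carrier_vec m0" "ud \<in> carrier_vec md" "uc \<in> carrier_vec mc"
     for xa xb xc xd u0 ud uc
  proof -
    have x: "xa @\<^sub>v xb @\<^sub>v xc @\<^sub>v xd \<in> carrier_vec (na+nb+nc+nd)"
      using that by (simp add: add.assoc)
    have "(C * ?Ts) *\<^sub>v (xa @\<^sub>v xb @\<^sub>v xc @\<^sub>v xd) = C *\<^sub>v (xa @\<^sub>v xb @\<^sub>v xc @\<^sub>v T *\<^sub>v xd)"
      using assoc_mult_mat_vec[OF sizes(10) Ts x] state_transform_mult_vec4[OF T that(1-4)] by simp
    then show ?thesis using old[of xa xb xc "T *\<^sub>v xd" u0 ud uc] that blocks T
      by (simp add: Cd_T)
  qed
  have new_dyn: "(?Tsi * A * ?Ts) *\<^sub>v (xa @\<^sub>v xb @\<^sub>v xc @\<^sub>v xd) + (?Tsi * B) *\<^sub>v (u0 @\<^sub>v ud @\<^sub>v uc) =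
        (Aa *\<^sub>v xa + Hab *\<^sub>v (Cdiag ls *\<^sub>v xb) + Had *\<^sub>v (Cdiag qs *\<^sub>v xd) + B0a *\<^sub>v y0)
        @\<^sub>v ((Jdiag ls + Hbb * Cdiag ls) *\<^sub>v xb + Hbd *\<^sub>v (Cdiag qs *\<^sub>v xd) + B0b *\<^sub>v y0)
        @\<^sub>v (Bc *\<^sub>v (Fca *\<^sub>v xa) + Hcb *\<^sub>v (Cdiag ls *\<^sub>v xb) + Ac *\<^sub>v xc
              + Hcd *\<^sub>v (Cdiag qs *\<^sub>v xd) + B0c *\<^sub>v y0 + Bc *\<^sub>v uc)
        @\<^sub>v (Bdiag qs *\<^sub>v (Fda *\<^sub>v xa) + Bdiag qs *\<^sub>v (Fdb *\<^sub>v xb) + Bdiag qs *\<^sub>v (Fdc *\<^sub>v xc)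
              + (Jdiag qs + Bdiag qs * F' + H' * Cdiag qs) *\<^sub>v xd + (Ti * B0d) *\<^sub>v y0 + Bdiag qs *\<^sub>v ud)"
    if "xa \<in> carrier_vec na" "xb \<in> carrier_vec nb" "xc \<in> carrier_vec nc" "xd \<in> carrier_vec nd"
       "u0 \<in> carrier_vec m0" "ud \<in> carrier_vec md" "uc \<in> carrier_vec mc"
       and y0: "y0 = C0a *\<^sub>v xa + C0b *\<^sub>v xb + C0c *\<^sub>v xc + (C0d * T) *\<^sub>v xd + u0"
     for xa xb xc xd u0 ud uc y0
  proof -
    let ?pa = "Aa *\<^sub>v xa + Hab *\<^sub>v (Cdiag ls *\<^sub>v xb) + Had *\<^sub>v (Cdiag qs *\<^sub>v xd) + B0a *\<^sub>v y0"
      and ?pb = "(Jdiag ls + Hbb * Cdiag ls) *\<^sub>v xb + Hbd *\<^sub>v (Cdiag qs *\<^sub>v xd) + B0b *\<^sub>v y0"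
      and ?pc = "Bc *\<^sub>v (Fca *\<^sub>v xa) + Hcb *\<^sub>v (Cdiag ls *\<^sub>v xb) + Ac *\<^sub>v xc
              + Hcd *\<^sub>v (Cdiag qs *\<^sub>v xd) + B0c *\<^sub>v y0 + Bc *\<^sub>v uc"
      and ?pd = "Bdiag qs *\<^sub>v (Fda *\<^sub>v xa) + Bdiag qs *\<^sub>v (Fdb *\<^sub>v xb) + Bdiag qs *\<^sub>v (Fdc *\<^sub>v xc)
              + (Jdiag qs + Bdiag qs * F + Hdd * Cdiag qs) *\<^sub>v (T *\<^sub>v xd) + B0d *\<^sub>v y0 + Bdiag qs *\<^sub>v ud"
    have u: "u0 @\<^sub>v ud @\<^sub>v uc \<in> carrier_vec (m0+md+mc)"
      using that by (simp add: add.assoc)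
    have "(?Tsi * A * ?Ts) *\<^sub>v (xa @\<^sub>v xb @\<^sub>v xc @\<^sub>v xd) + (?Tsi * B) *\<^sub>v (u0 @\<^sub>v ud @\<^sub>v uc)
        = ?Tsi *\<^sub>v (A *\<^sub>v (xa @\<^sub>v xb @\<^sub>v xc @\<^sub>v T *\<^sub>v xd) + B *\<^sub>v (u0 @\<^sub>v ud @\<^sub>v uc))"
      by (rule state_transform_conj_mult_vec[OF sizes(8,9) T Ti that(1-4) u])
    also have "\<dots> = ?Tsi *\<^sub>v (?pa @\<^sub>v ?pb @\<^sub>v ?pc @\<^sub>v ?pd)"
      using old[of xa xb xc "T *\<^sub>v xd" u0 ud uc] that T blocks y0 by (simp add: Cd_T)
    also have "\<dots> = ?pa @\<^sub>v ?pb @\<^sub>v ?pc @\<^sub>v Ti *\<^sub>v ?pd"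
      using that T blocks y0 diag_carriers Ab Ad_carrier
      by (intro state_transform_mult_vec4 Ti) (simp_all del: add_carrier_mat)
    also have "Ti *\<^sub>v ?pd = Bdiag qs *\<^sub>v (Fda *\<^sub>v xa) + Bdiag qs *\<^sub>v (Fdb *\<^sub>v xb) + Bdiag qs *\<^sub>v (Fdc *\<^sub>v xc)
              + (Jdiag qs + Bdiag qs * F' + H' * Cdiag qs) *\<^sub>v xd + (Ti * B0d) *\<^sub>v y0 + Bdiag qs *\<^sub>v ud"
      using that T Ti blocks y0 diag_carriers Ad_carrier
      unfolding Ad[symmetric] assoc_mult_mat_vec[OF mult_carrier_mat[OF Ti Ad_carrier] T that(4)]
      by (simp add: mult_add_distrib_mat_vec[OF Ti] Ti_Bd del: add_carrier_mat)
    finally show ?thesis .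
  qed
  show ?case
    apply (intro conjI)
    prefer 13
    apply (rule exI[of _ C0a], rule exI[of _ C0b], rule exI[of _ C0c], rule exI[of _ "C0d * T"],
      rule exI[of _ Aa], rule exI[of _ Hab], rule exI[of _ Had], rule exI[of _ B0a],
      rule exI[of _ Hbb], rule exI[of _ Hbd], rule exI[of _ B0b], rule exI[of _ Fca],
      rule exI[of _ Hcb], rule exI[of _ Ac], rule exI[of _ Hcd], rule exI[of _ B0c],
      rule exI[of _ Bc], rule exI[of _ Fda], rule exI[of _ Fdb], rule exI[of _ Fdc],
      rule exI[of _ H'], rule exI[of _ "Ti * B0d"])
    using sizes blocks T Ti H' F' Ts Tsi new_eqs new_dyn[OF _ _ _ _ _ _ _ refl]
    by (auto simp: add.assoc)
qed

theorem lemma2: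
  fixes A B C D Fdd :: "real mat"
    and na nb nc nd m0 md mc pb :: nat
    and ls qs :: "nat list"
  assumes scb: "is_SCB A B C D na nb nc nd m0 md mc pb ls qs Fdd"
    and rankD: "mat_rank D = m0"
    and rankBD: "full_rank (four_block_mat B (0\<^sub>m (na+nb+nc+nd) 0) D (0\<^sub>m (m0+md+pb) 0))"
    and rankCD: "full_rank (four_block_mat C D (0\<^sub>m 0 (na+nb+nc+nd)) (0\<^sub>m 0 (m0+md+mc)))"
  shows "\<exists>Td Tdi. Td \<in> carrier_mat nd nd \<and> Tdi \<in> carrier_mat nd nd \<and>
           Td * Tdi = 1\<^sub>m nd \<and> Tdi * Td = 1\<^sub>m nd \<and>
           (let Ts = four_block_mat (1\<^sub>m (na+nb+nc)) (0\<^sub>m (na+nb+nc) nd) (0\<^sub>m nd (na+nb+nc)) Td;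
                Tsi = four_block_mat (1\<^sub>m (na+nb+nc)) (0\<^sub>m (na+nb+nc) nd) (0\<^sub>m nd (na+nb+nc)) Tdi in
            \<exists>Fdd'. is_SCB (Tsi * A * Ts) (Tsi * B) (C * Ts) D na nb nc nd m0 md mc pb ls qs Fdd'
                   \<and> Fdd_structured qs Fdd') \<and>
           Cdiag qs * Td = Cdiag qs \<and> Tdi * Bdiag qs = Bdiag qs"
proof -
  have "sum_list qs = nd \<and> length qs = md \<and> (\<forall>q\<in>set qs. 1 \<le> q) \<and> sorted_wrt (\<ge>) qs \<and>
      Fdd \<in> carrier_mat md nd"
    using scb unfolding is_SCB_def by (elim conjE) (intro conjI; assumption)
  then have dims: "sum_list qs = nd" "length qs = md" and "d_block qs Fdd"
    by (auto simp: d_block_def d_block_axioms_def block_sizes_def)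
  then interpret d_block qs Fdd
    by simp
  obtain Ti where Ti: "Ti \<in> carrier_mat nd nd" "T * Ti = 1\<^sub>m nd" "Ti * T = 1\<^sub>m nd"
    using normalizer_invertible unfolding dims by blast
  have T: "T \<in> carrier_mat nd nd" using T_carrier unfolding dims .
  have F': "reduced_feedback qs Fdd \<in> carrier_mat md nd"
    using reduced_feedback_carrier[of qs Fdd] unfolding dims .
  have TiB: "Ti * Bdiag qs = Bdiag qs" using left_inverse_mult_Bdiag Ti unfolding dims by blast
  have "is_SCB (state_transform (na+nb+nc) nd Ti * A * state_transform (na+nb+nc) nd T)
                (state_transform (na+nb+nc) nd Ti * B) (C * state_transform (na+nb+nc) nd T) D
                na nb nc nd m0 md mc pb ls qs (reduced_feedback qs Fdd)"
    using normalizer_similarity Ti unfolding dims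
    by (intro is_SCB_transform_xd[OF scb T Ti(1) Cdiag_mult_normalizer TiB F']) auto
  with T Ti TiB Cdiag_mult_normalizer Fdd_structured_reduced_feedback show ?thesis
    unfolding Let_def by (intro exI[of _ T] exI[of _ Ti]) auto
qed
end
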